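(* Let $r\geq 1$, let $\mathbf a=(a_1,\ldots,a_r)$ be positive integers, and let $D$ be a positive common multiple of $a_1,\ldots,a_r$. Then for every integer $n\geq 0$, $$f_{\mathbf a}(n) = \frac{1}{(r-1)!} \sum_{j=0}^{\lfloor n/D\rfloor } \binom{r}{j}(-1)^j \sum_{\substack{0\leq j_1\leq \frac{D}{a_1}-1,\ldots, 0\leq j_r\leq \frac{D}{a_r}-1 \\ a_1j_1+\cdots+a_rj_r \equiv n \pmod D}} \prod_{\ell=1}^{r-1} \left(\frac{n-a_1j_{1}- \cdots -a_rj_r}{D}+\ell-j\right),$$ where the inner sum runs over integer tuples $(j_1,\ldots,j_r)$.
   Context: For $n\geq 0$, $f_{\mathbf a}(n)$ denotes the number of integer tuples $(j_1,\ldots,j_r)$ with $a_1j_1+\cdots+a_rj_r=n$ and $0\leq j_k\leq \frac{D}{a_k}-1$ for $1\leq k\leq r$; equivalently, $\sum_{n\geq 0} f_{\mathbf a}(n)z^n=\prod_{i=1}^r\frac{1-z^D}{1-z^{a_i}}$. *)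

theory Defs
  imports "HOL-Analysis.Analysis"
begin

text \<open>Admissible tuples (j_1,...,j_r), represented as functions on {1..r}
  (extensional, value undefined outside), with 0 \<le> j_k \<le> D/a_k - 1.\<close>
definition tuples :: "nat \<Rightarrow> (nat \<Rightarrow> nat) \<Rightarrow> nat \<Rightarrow> (nat \<Rightarrow> nat) set" where
  "tuples r a D = PiE {1..r} (\<lambda>k. {0..<D div a k})"

definition f_a :: "nat \<Rightarrow> (nat \<Rightarrow> nat) \<Rightarrow> nat \<Rightarrow> nat \<Rightarrow> nat" where
  "f_a r a D n = card {j \<in> tuples r a D. (\<Sum>k=1..r. a k * j k) = n}"

end

theory Submission
  imports Defs
begin

text \<open>For an admissible tuple t with weight s = a_1 t_1 + ... + a_r t_r congruent to n mod D,
  put q = (n - s)/D. Since 0 \<le> s < rD, q lies in the window n div D - r < q \<le> n div D.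
  The product \<Prod>l=1..r-1 (q + l - j) equals (r-1)! (-1)^(q-j) ((-r) gchoose (q-j)) when j \<le> q and
  vanishes for q < j \<le> q + r - 1, so by Vandermonde's identity the alternating sum over j
  collapses to (r-1)! ((r - r) gchoose q), which is (r-1)! if q = 0 and 0 otherwise.\<close>

lemma prod_shift_eq_0:
  fixes m :: int
  assumes "- (int r - 1) \<le> m" "m \<le> -1"
  shows "(\<Prod>l = 1..r - 1. real_of_int m + real l) = 0"
proof -
  have "nat (-m) \<in> {1..r-1}" and "real_of_int m + real (nat (-m)) = 0"
    using assms by auto
  then show ?thesis
    by (metis (no_types, lifting) finite_atLeastAtMost prod_zero_iff)
qed

lemma prod_shift_eq_fact_div: "(\<Prod>l = 1..k. real m + real l) = fact (m + k) / fact m"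
proof (induction k)
  case 0
  then show ?case by simp
next
  case (Suc k)
  have "(\<Prod>l = 1..Suc k. real m + real l) = fact (m + k) / fact m * (real (m + k) + 1)"
    using Suc by (simp add: prod.nat_ivl_Suc')
  also have "\<dots> = fact (m + Suc k) / fact m"
    by (simp add: algebra_simps)
  finally show ?case .
qed

lemma prod_shift_eq_gbinomial:
  assumes "r \<ge> 1"
  shows "(\<Prod>l = 1..r - 1. real m + real l) = fact (r - 1) * ((-1) ^ m * ((- real r) gchoose m))"
proof -
  have "(-1) ^ m * ((- real r) gchoose m) = real (m + (r - 1)) gchoose m"
    using assms by (simp add: gbinomial_minus of_nat_diff add.commute)
  also have "\<dots> = real ((m + (r - 1)) choose m)"
    by (simp only: binomial_gbinomial)
  also have "\<dots> = fact (m + (r - 1)) / (fact m * fact (r - 1))"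
    by (simp add: binomial_fact)
  finally have binom: "(-1) ^ m * ((- real r) gchoose m) = fact (m + (r - 1)) / (fact m * fact (r - 1))" .
  show ?thesis
    unfolding binom prod_shift_eq_fact_div by simp
qed

lemma alternating_sum_prod_shift:
  fixes q :: int and N r :: nat
  assumes r: "r \<ge> 1" and upper: "q \<le> int N" and window: "int N - q \<le> int r - 1"
  shows "(\<Sum>j = 0..N. real (r choose j) * (-1) ^ j *
           (\<Prod>l = 1..r - 1. real_of_int q + real l - real j)) = (if q = 0 then fact (r - 1) else 0)"
    (is "(\<Sum>j = 0..N. ?term j) = _")
proof -
  have term_eq_0: "?term j = 0" if "q < int j" "j \<le> N" for j
  proof -
    have "(\<Prod>l = 1..r - 1. real_of_int q + real l - real j)
        = (\<Prod>l = 1..r - 1. real_of_int (q - int j) + real l)"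
      by (intro prod.cong) auto
    also have "\<dots> = 0"
      using that window by (intro prod_shift_eq_0) auto
    finally show ?thesis by simp
  qed
  show ?thesis
  proof (cases "q < 0")
    case True
    then show ?thesis
      using term_eq_0 by (simp add: sum.neutral)
  next
    case False
    then obtain Q where Q: "q = int Q"
      by (metis nonneg_int_cases not_less)
    have "{0..N} = {0..Q} \<union> {Q<..N}" "{0..Q} \<inter> {Q<..N} = {}"
      using upper Q by auto
    then have "(\<Sum>j = 0..N. ?term j) = (\<Sum>j = 0..Q. ?term j) + (\<Sum>j\<in>{Q<..N}. ?term j)"
      by (simp add: sum.union_disjoint)
    also have "(\<Sum>j\<in>{Q<..N}. ?term j) = 0"
      using Q term_eq_0 by (intro sum.neutral) auto
    also have "(\<Sum>j = 0..Q. ?term j)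
        = (\<Sum>j = 0..Q. fact (r - 1) * (-1) ^ Q * ((real r gchoose j) * ((- real r) gchoose (Q - j))))"
    proof (intro sum.cong refl)
      fix j assume j: "j \<in> {0..Q}"
      have "(\<Prod>l = 1..r - 1. real_of_int q + real l - real j) = (\<Prod>l = 1..r - 1. real (Q - j) + real l)"
        using j Q by (intro prod.cong) auto
      also have "\<dots> = fact (r - 1) * ((-1) ^ (Q - j) * ((- real r) gchoose (Q - j)))"
        using r by (rule prod_shift_eq_gbinomial)
      finally have "?term j = fact (r - 1) * ((-1) ^ j * (-1) ^ (Q - j))
          * (real (r choose j) * ((- real r) gchoose (Q - j)))"
        by (simp add: algebra_simps)
      moreover have "(-1::real) ^ j * (-1) ^ (Q - j) = (-1) ^ Q"
        using j by (simp add: power_add[symmetric])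
      ultimately show "?term j = fact (r - 1) * (-1) ^ Q * ((real r gchoose j) * ((- real r) gchoose (Q - j)))"
        by (simp add: binomial_gbinomial)
    qed
    also have "\<dots> = fact (r - 1) * (-1) ^ Q * ((real r + - real r) gchoose Q)"
      by (simp add: sum_distrib_left[symmetric] gbinomial_Vandermonde)
    finally show ?thesis
      using Q by (simp add: gbinomial_0_left)
  qed
qed

lemma finite_tuples: "finite (tuples r a D)"
  unfolding tuples_def by (intro finite_PiE) auto

lemma tuple_weight_less:
  assumes "r \<ge> 1" "\<And>k. k \<in> {1..r} \<Longrightarrow> a k > 0" "\<And>k. k \<in> {1..r} \<Longrightarrow> a k dvd D"
    and "t \<in> tuples r a D"
  shows "(\<Sum>k=1..r. a k * t k) < r * D"
proof -
  have "(\<Sum>k=1..r. a k * t k) < (\<Sum>k=1..r. D)"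
  proof (rule sum_strict_mono)
    fix k assume k: "k \<in> {1..r}"
    have "t k < D div a k"
      using assms(4) k unfolding tuples_def by (auto simp: PiE_iff)
    then have "a k * t k < a k * (D div a k)"
      using assms(2)[OF k] by simp
    also have "\<dots> = D"
      using assms(3)[OF k] by simp
    finally show "a k * t k < D" .
  qed (use assms(1) in simp_all)
  then show ?thesis by simp
qed

lemma quotient_window:
  fixes n s D r :: nat
  assumes "D > 0" "s < r * D" "s mod D = n mod D"
  defines "q \<equiv> (int n - int s) div int D"
  shows "int n - int s = q * int D" "q \<le> int (n div D)" "int (n div D) - q \<le> int r - 1"
proof -
  show e: "int n - int s = q * int D"
    using assms(3) unfolding q_def by (metis dvd_div_mult_self mod_eq_dvd_iff of_nat_mod)
  have "n div D * D \<le> n" "n < n div D * D + D"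
    using assms(1) div_mult_mod_eq[of n D] mod_less_divisor[of D n] by linarith+
  then have nD: "int (n div D) * int D \<le> int n" "int n < int (n div D) * int D + int D"
    by (simp_all add: of_nat_mult[symmetric] del: of_nat_mult)
  have "q * int D < (int (n div D) + 1) * int D"
    using e nD by (simp add: algebra_simps)
  then show "q \<le> int (n div D)"
    using assms(1) by (simp add: mult_less_cancel_right)
  have "(int (n div D) - int r) * int D < q * int D"
    using e nD assms(2) by (simp add: algebra_simps of_nat_mult[symmetric] del: of_nat_mult)
  then show "int (n div D) - q \<le> int r - 1"
    using assms(1) by (simp add: mult_less_cancel_right)
qed

lemma weight_indicator_eq_alternating_sum:
  fixes n s D r :: nat
  assumes "r \<ge> 1" "D > 0" "s < r * D" "s mod D = n mod D"
  shows "(if s = n then 1 else 0) = 1 / fact (r - 1) * (\<Sum>j = 0..n div D. real (r choose j) * (-1) ^ j *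
           (\<Prod>l = 1..r - 1. real_of_int (int n - int s) / real D + real l - real j))"
proof -
  define q where "q = (int n - int s) div int D"
  have q: "int n - int s = q * int D" "q \<le> int (n div D)" "int (n div D) - q \<le> int r - 1"
    using quotient_window[OF assms(2-4)] unfolding q_def by blast+
  have "real_of_int (int n - int s) / real D = real_of_int q"
    using q(1) assms(2) by simp
  moreover have "q = 0 \<longleftrightarrow> s = n"
    using q(1) assms(2) by auto
  ultimately show ?thesis
    using alternating_sum_prod_shift[OF assms(1) q(2,3)] by simp
qed

theorem proposition2p1:
  fixes r D n :: nat and a :: "nat \<Rightarrow> nat"
  assumes "r \<ge> 1"
    and "\<And>k. k \<in> {1..r} \<Longrightarrow> a k > 0"
    and "D > 0"
    and "\<And>k. k \<in> {1..r} \<Longrightarrow> a k dvd D"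
  shows "real (f_a r a D n) =
    1 / fact (r - 1) *
    (\<Sum>j = 0..n div D. real (r choose j) * (-1) ^ j *
       (\<Sum>t \<in> {t \<in> tuples r a D. (\<Sum>k=1..r. a k * t k) mod D = n mod D}.
          (\<Prod>l = 1..r - 1.
             (real_of_int (int n - int (\<Sum>k=1..r. a k * t k)) / real D
              + real l - real j))))"
proof -
  define s where "s t = (\<Sum>k=1..r. a k * t k)" for t :: "nat \<Rightarrow> nat"
  define S where "S = {t \<in> tuples r a D. s t mod D = n mod D}"
  have "real (f_a r a D n) = real (card (S \<inter> {t. s t = n}))"
    unfolding f_a_def S_def s_def by (rule arg_cong[where f = "\<lambda>A. real (card A)"]) auto
  also have "\<dots> = (\<Sum>t\<in>S. if s t = n then 1 else 0)"
    using finite_tuples[of r a D] by (simp add: sum.If_cases S_def)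
  also have "\<dots> = (\<Sum>t\<in>S. 1 / fact (r - 1) * (\<Sum>j = 0..n div D. real (r choose j) * (-1) ^ j *
          (\<Prod>l = 1..r - 1. real_of_int (int n - int (s t)) / real D + real l - real j)))"
    using tuple_weight_less[OF assms(1,2,4)] weight_indicator_eq_alternating_sum[OF assms(1,3)]
    unfolding S_def s_def by (intro sum.cong) auto
  also have "\<dots> = 1 / fact (r - 1) * (\<Sum>j = 0..n div D. real (r choose j) * (-1) ^ j *
       (\<Sum>t \<in> S. (\<Prod>l = 1..r - 1. real_of_int (int n - int (s t)) / real D + real l - real j)))"
    by (simp add: sum_distrib_left sum.swap[of _ "{0..n div D}" S])
  finally show ?thesis
    unfolding S_def s_def .
qed

end
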